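(* For every $n\ge1$, $$M_n=U_n\cup\bigcup_{j\ge n}\big((\bar\beta_j-n)+M_0\big).$$
   Context: $K$ is an algebraically closed field, $A=K[x,y]_{(x,y)}$. Set $\bar\beta_0=1$, $\bar\beta_{i+1}=2\bar\beta_i+2^{-(i+1)}$, i.e. $\bar\beta_i=\frac13(2^{i+2}-2^{-i})$. Let $P_0=x$, $P_1=y$, $P_{i+1}=P_i^2-P_0^{2^{i+1}}P_{i-1}$ ($i\ge1$). Let $\bar\nu$ be the valuation of $K(x,y)$ dominating $A$ for which $P_0,P_1,P_2,\dots$ is a (minimal) generating sequence with $\bar\nu(P_i)=\bar\beta_i$; its value group is $\bigcup_{i\ge0}2^{-i}\mathbb Z$ and its semigroup on $A$ is $M_0=\bar\nu(A\setminus\{0\})=\sum_{i\ge0}\mathbb N\bar\beta_i$. Let $z=y/x$, $W_n=\{a_0+a_1z+\cdots+a_nz^n\mid a_j\in K[x,y]\}$, $M_n=\{\bar\nu(f)\mid 0\ne f\in W_n\}$ (an $M_0$-module), and $U_n=\{\lambda\in M_n\mid \lambda=\sum_{j=0}^{n-1}l_j\bar\beta_j$ for some $l_j\in\mathbb Z\}$. *)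

theory Defs
  imports "HOL-Computational_Algebra.Polynomial" "HOL-Computational_Algebra.Fraction_Field"
begin

text \<open>K[x,y] is modelled as 'k poly poly: the outer variable is y, the inner one is x.
  K(x,y) is the fraction field ('k poly poly) fract.\<close>

definition emb :: "'k::field poly poly \<Rightarrow> 'k poly poly fract" where
  "emb p = Fract p 1"

definition varX :: "'k::field poly poly" where "varX = [:[:0, 1:]:]"
definition varY :: "'k::field poly poly" where "varY = [:0, 1:]"

definition at_origin :: "'k::field poly poly \<Rightarrow> 'k" where
  "at_origin p = poly (poly p 0) 0"

text \<open>The local ring A = K[x,y]_(x,y) inside K(x,y), and its maximal ideal.\<close>
definition locA :: "'k::field poly poly fract set" where
  "locA = {Fract a b | a b. at_origin b \<noteq> 0}"

definition maxA :: "'k::field poly poly fract set" where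
  "maxA = {Fract a b | a b. at_origin b \<noteq> 0 \<and> at_origin a = 0}"

text \<open>v is a (rational-valued) valuation of K(x,y) dominating A (value of 0 is irrelevant).\<close>
definition valuation_dominating :: "('k::field poly poly fract \<Rightarrow> rat) \<Rightarrow> bool" where
  "valuation_dominating v \<longleftrightarrow>
     (\<forall>f g. f \<noteq> 0 \<longrightarrow> g \<noteq> 0 \<longrightarrow> v (f * g) = v f + v g) \<and>
     (\<forall>f g. f \<noteq> 0 \<longrightarrow> g \<noteq> 0 \<longrightarrow> f + g \<noteq> 0 \<longrightarrow> v (f + g) \<ge> min (v f) (v g)) \<and>
     (\<forall>f\<in>locA. f \<noteq> 0 \<longrightarrow> v f \<ge> 0) \<and>
     (\<forall>f\<in>maxA. f \<noteq> 0 \<longrightarrow> v f > 0)"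

definition bbeta :: "nat \<Rightarrow> rat" where
  "bbeta i = (2 ^ (i + 2) - inverse (2 ^ i)) / 3"

fun Pseq :: "nat \<Rightarrow> 'k::field poly poly" where
  "Pseq 0 = varX"
| "Pseq (Suc 0) = varY"
| "Pseq (Suc (Suc i)) = (Pseq (Suc i))^2 - varX ^ (2 ^ (Suc (Suc i))) * Pseq i"

definition Pmon :: "nat list \<Rightarrow> 'k::field poly poly fract" where
  "Pmon a = (\<Prod>i<length a. emb (Pseq i) ^ (a ! i))"

definition mon_val :: "nat list \<Rightarrow> rat" where
  "mon_val a = (\<Sum>i<length a. of_nat (a ! i) * bbeta i)"

definition ideal_genA :: "'k::field poly poly fract set \<Rightarrow> 'k poly poly fract set" where
  "ideal_genA G = {\<Sum>g\<in>S. c g * g | S c. finite S \<and> S \<subseteq> G \<and> c ` S \<subseteq> locA}"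

definition generating_sequence :: "('k::field poly poly fract \<Rightarrow> rat) \<Rightarrow> bool" where
  "generating_sequence v \<longleftrightarrow>
     (\<forall>\<gamma>::rat. {f \<in> locA. f = 0 \<or> v f \<ge> \<gamma>} = ideal_genA {Pmon a | a. mon_val a \<ge> \<gamma>})"

definition is_bar_nu :: "('k::field poly poly fract \<Rightarrow> rat) \<Rightarrow> bool" where
  "is_bar_nu v \<longleftrightarrow> valuation_dominating v \<and> (\<forall>i. v (emb (Pseq i)) = bbeta i) \<and> generating_sequence v"

definition zvar :: "'k::field poly poly fract" where
  "zvar = emb varY / emb varX"

definition Wn :: "nat \<Rightarrow> 'k::field poly poly fract set" where
  "Wn n = {\<Sum>j\<le>n. emb (a j) * zvar ^ j | a. True}"

definition Mn :: "('k::field poly poly fract \<Rightarrow> rat) \<Rightarrow> nat \<Rightarrow> rat set" where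
  "Mn v n = {v f | f. f \<in> Wn n \<and> f \<noteq> 0}"

definition M0 :: "('k::field poly poly fract \<Rightarrow> rat) \<Rightarrow> rat set" where
  "M0 v = {v f | f. f \<in> locA \<and> f \<noteq> 0}"

definition Useg :: "('k::field poly poly fract \<Rightarrow> rat) \<Rightarrow> nat \<Rightarrow> rat set" where
  "Useg v n = {lam \<in> Mn v n. \<exists>l::nat \<Rightarrow> int. lam = (\<Sum>j<n. of_int (l j) * bbeta j)}"

end

theory Submission imports Defs begin

(*
  Multiplying by x^n maps W_n into K[x,y]; conversely, for a polynomial p in the
  n-th power (x,y)^n of the maximal ideal, p / x^n lies in W_n.  Hence
    * every value of W_n is nu(F) - n for a polynomial F, and since (P_i) is a generating
      sequence, nu(F) is the value sum a_i beta_i of a monomial in the P_i.  If some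
      exponent a_i with i >= n is positive, we split off one beta_i and land in
      (beta_i - n) + M_0; otherwise the value is an integer combination of beta_0..beta_(n-1)
      (using beta_0 = 1 to absorb -n), i.e. it lies in U_n;
    * conversely P_j lies in (x,y)^j, so for j >= n and g = a/b in A the element
      P_j a / x^n lies in W_n and has value (beta_j - n) + nu(g).
*)

lemma emb_0 [simp]: "emb 0 = 0"
  by (simp add: emb_def fract_collapse)

lemma emb_1 [simp]: "emb 1 = 1"
  by (simp add: emb_def fract_collapse)

lemma emb_add: "emb (p + q) = emb p + emb q"
  by (simp add: emb_def)

lemma emb_mult: "emb (p * q) = emb p * emb q"
  by (simp add: emb_def)

lemma emb_sum: "emb (sum f A) = (\<Sum>x\<in>A. emb (f x))"
  by (induction A rule: infinite_finite_induct) (simp_all add: emb_add)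

lemma emb_prod: "emb (prod f A) = (\<Prod>x\<in>A. emb (f x))"
  by (induction A rule: infinite_finite_induct) (simp_all add: emb_mult)

lemma emb_power: "emb (p ^ k) = emb p ^ k"
  by (induction k) (simp_all add: emb_mult)

lemma emb_eq_0_iff [simp]: "emb p = 0 \<longleftrightarrow> p = 0"
  by (simp add: emb_def Zero_fract_def eq_fract)

lemma Fract_emb: "b \<noteq> 0 \<Longrightarrow> Fract a b = emb a / emb b"
  by (simp add: emb_def divide_fract_def)

lemma emb_locA: "emb p \<in> locA"
  unfolding locA_def emb_def by (force simp: at_origin_def)

lemma varX_ne0 [simp]: "varX \<noteq> 0"
  by (simp add: varX_def)

text \<open>As a polynomial in y, P_i has degree 2^i div 2 (the x-adic factor in the recursion
  has y-degree 0 and cannot cancel the leading term of P_i^2); in particular P_i \<noteq> 0.\<close>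
lemma Pseq_degree:
  "degree (Pseq i :: 'a::field poly poly) = 2 ^ i div 2 \<and> (Pseq i :: 'a poly poly) \<noteq> 0"
proof (induction i rule: Pseq.induct)
  case 1
  then show ?case by (simp add: varX_def)
next
  case 2
  then show ?case by (simp add: varY_def)
next
  case (3 i)
  define p :: "'a poly poly" where "p = Pseq (Suc i) ^ 2"
  define q :: "'a poly poly" where "q = varX ^ (2 ^ Suc (Suc i)) * Pseq i"
  have deg_p: "degree p = 2 ^ Suc i"
    using "3.IH"(1) unfolding p_def by (simp add: degree_power_eq)
  have "degree (varX ^ m :: 'a poly poly) = 0" for m
    by (simp add: varX_def degree_power_eq)
  then have "degree q \<le> degree (Pseq i :: 'a poly poly)"
    unfolding q_def by (metis add_0 degree_mult_le)
  also have "\<dots> < 2 ^ Suc i"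
    using "3.IH"(2) by (simp add: less_mult_imp_div_less)
  finally have "degree (- q) < degree p"
    using deg_p by simp
  then have "degree (p + - q) = degree p"
    by (rule degree_add_eq_left)
  moreover have "Pseq (Suc (Suc i)) = p + - q"
    by (simp add: p_def q_def)
  ultimately show ?case
    using deg_p by (auto simp del: Pseq.simps)
qed

lemma Pseq_ne0: "(Pseq i :: 'a::field poly poly) \<noteq> 0"
  using Pseq_degree by blast

text \<open>The n-th power (x,y)^n of the maximal ideal of K[x,y], generated inductively:
  \<open>in_max_power n p\<close> means p \<in> (x,y)^n.\<close>
inductive in_max_power :: "nat \<Rightarrow> 'a::field poly poly \<Rightarrow> bool" where
  zero: "in_max_power 0 p"
| add: "in_max_power n p \<Longrightarrow> in_max_power n q \<Longrightarrow> in_max_power n (p + q)"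
| scale: "in_max_power n p \<Longrightarrow> in_max_power n (c * p)"
| varX: "in_max_power n p \<Longrightarrow> in_max_power (Suc n) (varX * p)"
| varY: "in_max_power n p \<Longrightarrow> in_max_power (Suc n) (varY * p)"

lemma in_max_power_mono: "in_max_power m p \<Longrightarrow> n \<le> m \<Longrightarrow> in_max_power n p"
proof (induction arbitrary: n rule: in_max_power.induct)
  case (varX m p)
  then show ?case
    by (cases n) (auto intro: in_max_power.intros)
next
  case (varY m p)
  then show ?case
    by (cases n) (auto intro: in_max_power.intros)
qed (auto intro: in_max_power.intros)

lemma in_max_power_mult:
  "in_max_power a p \<Longrightarrow> in_max_power b q \<Longrightarrow> in_max_power (a + b) (p * q)"
proof (induction arbitrary: q rule: in_max_power.induct)
  case (zero p)
  then show ?case by (simp add: in_max_power.scale)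
next
  case (add n p1 p2)
  then show ?case by (simp add: distrib_right in_max_power.add)
next
  case (scale n p c)
  then show ?case by (metis in_max_power.scale mult.assoc)
next
  case (varX n p)
  then show ?case by (metis add_Suc in_max_power.varX mult.assoc)
next
  case (varY n p)
  then show ?case by (metis add_Suc in_max_power.varY mult.assoc)
qed

lemma in_max_power_varX_power: "in_max_power k (varX ^ k)"
  by (induction k) (auto intro: in_max_power.zero in_max_power.varX)

text \<open>The key-polynomial P_j lies in (x,y)^j: both terms of the recursion do.\<close>
lemma in_max_power_Pseq: "in_max_power j (Pseq j :: 'a::field poly poly)"
proof (induction j rule: Pseq.induct)
  case 1
  then show ?case by (rule in_max_power.zero)
next
  case 2
  then show ?case using in_max_power.varY[OF in_max_power.zero[of 1]] by simp
next
  case (3 i)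
  have "in_max_power (Suc i + Suc i) (Pseq (Suc i) ^ 2 :: 'a poly poly)"
    using in_max_power_mult[OF "3.IH"(1) "3.IH"(1)] by (simp add: power2_eq_square)
  then have square: "in_max_power (Suc (Suc i)) (Pseq (Suc i) ^ 2 :: 'a poly poly)"
    by (rule in_max_power_mono) simp
  have "in_max_power (2 ^ Suc (Suc i) + i) (varX ^ (2 ^ Suc (Suc i)) * Pseq i :: 'a poly poly)"
    by (rule in_max_power_mult[OF in_max_power_varX_power "3.IH"(2)])
  moreover have "Suc (Suc i) \<le> 2 ^ Suc (Suc i) + i"
    using less_exp[of "Suc (Suc i)"] by linarith
  ultimately have tail: "in_max_power (Suc (Suc i)) (varX ^ (2 ^ Suc (Suc i)) * Pseq i :: 'a poly poly)"
    by (rule in_max_power_mono)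
  show ?case
    using in_max_power.add[OF square in_max_power.scale[OF tail, of "-1"]] by simp
qed

lemma Wn_intro: "f = (\<Sum>j\<le>n. emb (a j) * zvar ^ j) \<Longrightarrow> f \<in> Wn n"
  unfolding Wn_def by auto

lemma Wn_add:
  assumes "f \<in> Wn n" "g \<in> Wn n"
  shows "f + g \<in> Wn n"
proof -
  obtain a b where "f = (\<Sum>j\<le>n. emb (a j) * zvar ^ j)" "g = (\<Sum>j\<le>n. emb (b j) * zvar ^ j)"
    using assms unfolding Wn_def by auto
  then have "f + g = (\<Sum>j\<le>n. emb (a j + b j) * zvar ^ j)"
    by (simp add: emb_add sum.distrib distrib_right)
  then show ?thesis by (rule Wn_intro)
qed

lemma Wn_scale:
  assumes "f \<in> Wn n"
  shows "emb c * f \<in> Wn n"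
proof -
  obtain a where "f = (\<Sum>j\<le>n. emb (a j) * zvar ^ j)"
    using assms unfolding Wn_def by auto
  then have "emb c * f = (\<Sum>j\<le>n. emb (c * a j) * zvar ^ j)"
    by (simp add: emb_mult sum_distrib_left mult.assoc)
  then show ?thesis by (rule Wn_intro)
qed

lemma Wn_Suc:
  assumes "f \<in> Wn n"
  shows "f \<in> Wn (Suc n)"
proof -
  obtain a where "f = (\<Sum>j\<le>n. emb (a j) * zvar ^ j)"
    using assms unfolding Wn_def by auto
  then have "f = (\<Sum>j\<le>Suc n. emb ((a(Suc n := 0)) j) * zvar ^ j)"
    by (simp add: sum.atMost_Suc)
  then show ?thesis by (rule Wn_intro)
qed

lemma Wn_zvar:
  assumes "f \<in> Wn n"
  shows "zvar * f \<in> Wn (Suc n)"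
proof -
  obtain a where fa: "f = (\<Sum>j\<le>n. emb (a j) * zvar ^ j)"
    using assms unfolding Wn_def by auto
  define b where "b j = (case j of 0 \<Rightarrow> 0 | Suc k \<Rightarrow> a k)" for j
  have "(\<Sum>j\<le>Suc n. emb (b j) * zvar ^ j) = emb (b 0) * zvar ^ 0 + (\<Sum>j\<le>n. emb (b (Suc j)) * zvar ^ Suc j)"
    by (rule sum.atMost_Suc_shift)
  also have "\<dots> = zvar * f"
    using fa by (simp add: b_def sum_distrib_left mult_ac)
  finally have "zvar * f = (\<Sum>j\<le>Suc n. emb (b j) * zvar ^ j)"
    by simp
  then show ?thesis by (rule Wn_intro)
qed

text \<open>Dividing an element of (x,y)^n by x^n yields an element of W_n, since x/x = 1 and
  y/x = z.\<close>
lemma in_max_power_Wn: "in_max_power n p \<Longrightarrow> emb p / emb varX ^ n \<in> Wn n"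
proof (induction rule: in_max_power.induct)
  case (zero p)
  show ?case
    using Wn_intro[where a="\<lambda>_. p" and n=0] by simp
next
  case (add n p q)
  then show ?case by (metis Wn_add add_divide_distrib emb_add)
next
  case (scale n p c)
  then show ?case by (metis Wn_scale emb_mult times_divide_eq_right)
next
  case (varX n p)
  have "emb (varX * p) / emb varX ^ Suc n = emb p / emb varX ^ n"
    by (simp add: emb_mult)
  then show ?case using varX.IH Wn_Suc by metis
next
  case (varY n p)
  have "emb (varY * p) / emb varX ^ Suc n = zvar * (emb p / emb varX ^ n)"
    by (simp add: emb_mult zvar_def)
  then show ?case using varY.IH Wn_zvar by metis
qed

text \<open>Conversely x^n W_n \<subseteq> K[x,y], as x^n z^j = y^j x^(n-j) for j \<le> n.\<close>
lemma Wn_times_varX_power: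
  assumes "f \<in> Wn n"
  obtains F where "f * emb varX ^ n = emb F"
proof -
  obtain a where fa: "f = (\<Sum>j\<le>n. emb (a j) * zvar ^ j)"
    using assms unfolding Wn_def by auto
  have monomial: "zvar ^ j * emb varX ^ n = emb (varY ^ j * varX ^ (n - j))" if "j \<le> n" for j
  proof -
    have split: "emb varX ^ n = emb varX ^ j * emb varX ^ (n - j)"
      using that by (simp add: power_add[symmetric])
    have "zvar ^ j * emb varX ^ n = (emb varY ^ j / emb varX ^ j) * (emb varX ^ j * emb varX ^ (n - j))"
      by (simp only: zvar_def power_divide split)
    also have "\<dots> = emb (varY ^ j * varX ^ (n - j))"
      by (simp add: emb_mult emb_power)
    finally show ?thesis .
  qed
  have "f * emb varX ^ n = (\<Sum>j\<le>n. emb (a j) * (zvar ^ j * emb varX ^ n))"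
    using fa by (simp add: sum_distrib_right mult.assoc)
  also have "\<dots> = emb (\<Sum>j\<le>n. a j * (varY ^ j * varX ^ (n - j)))"
    by (simp add: emb_sum emb_mult monomial)
  finally show ?thesis using that by blast
qed

lemma bbeta_0: "bbeta 0 = 1"
  by (simp add: bbeta_def)

lemma mon_val_split_off:
  assumes "j < length a" "a ! j \<ge> 1"
  shows "mon_val a = bbeta j + mon_val (a[j := a ! j - 1])"
proof -
  have "mon_val a = (\<Sum>i<length a. of_nat ((a[j := a ! j - 1]) ! i) * bbeta i + (if i = j then bbeta j else 0))"
    unfolding mon_val_def
  proof (rule sum.cong)
    fix i assume "i \<in> {..<length a}"
    show "of_nat (a ! i) * bbeta i = of_nat ((a[j := a ! j - 1]) ! i) * bbeta i + (if i = j then bbeta j else 0)"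
      using assms by (cases "i = j") (auto simp: of_nat_diff algebra_simps)
  qed simp
  also have "\<dots> = mon_val (a[j := a ! j - 1]) + bbeta j"
    unfolding mon_val_def using assms by (simp add: sum.distrib)
  finally show ?thesis by simp
qed

lemma mon_val_truncate:
  assumes "\<forall>i<length a. n \<le> i \<longrightarrow> a ! i = 0"
  shows "mon_val a = (\<Sum>i<n. of_nat (if i < length a then a ! i else 0) * bbeta i)"
proof -
  define g where "g i = of_nat (if i < length a then a ! i else 0) * bbeta i" for i
  have "mon_val a = (\<Sum>i<length a. g i)"
    unfolding mon_val_def g_def by simp
  also have "\<dots> = (\<Sum>i<max (length a) n. g i)"
    by (rule sum.mono_neutral_left) (auto simp: g_def)
  also have "\<dots> = (\<Sum>i<n. g i)"
    by (rule sum.mono_neutral_right) (use assms in \<open>auto simp: g_def\<close>)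
  finally show ?thesis unfolding g_def .
qed

text \<open>The dichotomy behind the theorem: a monomial value minus n either has a summand
  beta_i with i \<ge> n, or is an integer combination of beta_0, ..., beta_(n-1)
  (the -n is absorbed by beta_0 = 1).\<close>
lemma mon_val_minus_cases:
  assumes "n \<ge> 1"
  obtains (high) i a' where "n \<le> i" "mon_val a - of_nat n = (bbeta i - of_nat n) + mon_val a'"
    | (low) l :: "nat \<Rightarrow> int" where "mon_val a - of_nat n = (\<Sum>j<n. of_int (l j) * bbeta j)"
proof (cases "\<exists>i<length a. n \<le> i \<and> a ! i \<noteq> 0")
  case True
  then obtain i where "i < length a" "n \<le> i" "a ! i \<ge> 1"
    by force
  then show ?thesis
    using high mon_val_split_off by fastforce
next
  case False
  define l where "l j = int (if j < length a then a ! j else 0) - (if j = 0 then int n else 0)" for j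
  have termwise: "of_int (l j) * bbeta j
      = of_nat (if j < length a then a ! j else 0) * bbeta j - (if j = 0 then of_nat n * bbeta j else 0)" for j
    by (simp add: l_def algebra_simps)
  have "(\<Sum>j<n. of_int (l j) * bbeta j)
      = (\<Sum>j<n. of_nat (if j < length a then a ! j else 0) * bbeta j) - (\<Sum>j<n. if j = 0 then of_nat n * bbeta j else 0)"
    by (simp only: termwise sum_subtractf)
  also have "(\<Sum>j<n. if j = 0 then of_nat n * bbeta j else 0) = (of_nat n :: rat)"
    using assms by (simp add: bbeta_0)
  also have "(\<Sum>j<n. of_nat (if j < length a then a ! j else 0) * bbeta j) = mon_val a"
    using False mon_val_truncate[of a n] by auto
  finally show ?thesis
    using low by metis
qed

context
  fixes v :: "'k::field poly poly fract \<Rightarrow> rat"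
  assumes dominating: "valuation_dominating v"
begin

lemma v_mult: "f \<noteq> 0 \<Longrightarrow> g \<noteq> 0 \<Longrightarrow> v (f * g) = v f + v g"
  using dominating unfolding valuation_dominating_def by blast

lemma v_add: "f \<noteq> 0 \<Longrightarrow> g \<noteq> 0 \<Longrightarrow> f + g \<noteq> 0 \<Longrightarrow> v (f + g) \<ge> min (v f) (v g)"
  using dominating unfolding valuation_dominating_def by blast

lemma v_locA: "f \<in> locA \<Longrightarrow> f \<noteq> 0 \<Longrightarrow> v f \<ge> 0"
  using dominating unfolding valuation_dominating_def by blast

lemma v_one: "v 1 = 0"
  using v_mult[of 1 1] by simp

lemma v_inverse: "h \<noteq> 0 \<Longrightarrow> v (inverse h) = - v h"
  using v_mult[of h "inverse h"] v_one by simp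

lemma v_divide: "f \<noteq> 0 \<Longrightarrow> g \<noteq> 0 \<Longrightarrow> v (f / g) = v f - v g"
  by (simp add: divide_inverse v_mult v_inverse)

lemma v_power: "h \<noteq> 0 \<Longrightarrow> v (h ^ k) = of_nat k * v h"
  by (induction k) (simp_all add: v_one v_mult algebra_simps)

lemma v_prod: "finite I \<Longrightarrow> (\<forall>i\<in>I. f i \<noteq> 0) \<Longrightarrow> v (prod f I) = (\<Sum>i\<in>I. v (f i))"
  by (induction I rule: finite_induct) (simp_all add: v_one v_mult)

text \<open>Units of A have value 0; hence an element a/b of A has the value of its numerator.\<close>
lemma v_Fract:
  assumes "at_origin b \<noteq> 0" "a \<noteq> 0"
  shows "v (Fract a b) = v (emb a)"
proof -
  have b0: "b \<noteq> 0"
    using assms(1) by (auto simp: at_origin_def)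
  have "inverse (emb b) = Fract 1 b"
    by (simp add: emb_def)
  then have "inverse (emb b) \<in> locA"
    unfolding locA_def using assms(1) by blast
  then have "v (emb b) \<le> 0"
    using v_locA[of "inverse (emb b)"] v_inverse[of "emb b"] b0 by simp
  moreover have "v (emb b) \<ge> 0"
    using v_locA[OF emb_locA] b0 by simp
  ultimately show ?thesis
    using assms(2) b0 by (simp add: Fract_emb v_divide)
qed

lemma v_sum_gt:
  "finite S \<Longrightarrow> (\<forall>g\<in>S. t g = 0 \<or> v (t g) > \<gamma>) \<Longrightarrow> sum t S = 0 \<or> v (sum t S) > \<gamma>"
proof (induction S rule: finite_induct)
  case (insert x F)
  then have tx: "t x = 0 \<or> v (t x) > \<gamma>" and tF: "sum t F = 0 \<or> v (sum t F) > \<gamma>"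
    by auto
  have "t x + sum t F = 0 \<or> v (t x + sum t F) > \<gamma>"
  proof (cases "t x = 0 \<or> sum t F = 0 \<or> t x + sum t F = 0")
    case True
    then show ?thesis using tx tF by auto
  next
    case False
    then have "min (v (t x)) (v (sum t F)) \<le> v (t x + sum t F)"
      by (simp add: v_add)
    then show ?thesis
      using tx tF False by linarith
  qed
  then show ?case
    using insert by simp
qed simp

end

lemma Pmon_emb: "Pmon a = emb (\<Prod>i<length a. Pseq i ^ (a ! i))"
  unfolding Pmon_def by (simp add: emb_prod emb_power)

lemma Pmon_ne0: "(Pmon a :: 'a::field poly poly fract) \<noteq> 0"
  unfolding Pmon_emb using Pseq_ne0[where 'a='a] by simp

context
  fixes v :: "'k::field poly poly fract \<Rightarrow> rat"
  assumes bar_nu: "is_bar_nu v"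
begin

lemma bar_nu_dominating: "valuation_dominating v"
  using bar_nu unfolding is_bar_nu_def by blast

lemma v_Pseq: "v (emb (Pseq i)) = bbeta i"
  using bar_nu unfolding is_bar_nu_def by blast

lemma v_varX: "v (emb varX) = 1"
  using v_Pseq[of 0] by (simp add: bbeta_0)

lemma v_Pmon: "v (Pmon a) = mon_val a"
proof -
  have "v (Pmon a) = (\<Sum>i<length a. v (emb (Pseq i) ^ (a ! i)))"
    unfolding Pmon_def by (rule v_prod[OF bar_nu_dominating]) (simp_all add: Pseq_ne0)
  also have "\<dots> = mon_val a"
    unfolding mon_val_def by (simp add: v_power[OF bar_nu_dominating] Pseq_ne0 v_Pseq)
  finally show ?thesis .
qed

lemma mon_val_in_M0: "mon_val a \<in> M0 v"
proof -
  have "Pmon a \<in> locA"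
    unfolding Pmon_emb by (rule emb_locA)
  then show ?thesis
    unfolding M0_def using v_Pmon[of a] Pmon_ne0[where 'a='k] by force
qed

text \<open>... and, since (P_i) is a generating sequence, they exhaust it: if v h were not a
  monomial value, h would be an A-combination of monomials of value > v h.\<close>
lemma locA_value_is_mon_val:
  assumes "h \<in> locA" "h \<noteq> 0"
  obtains a where "v h = mon_val a"
proof -
  have "\<exists>a. v h = mon_val a"
  proof (rule ccontr)
    assume no_mon: "\<nexists>a. v h = mon_val a"
    have "h \<in> {f \<in> locA. f = 0 \<or> v f \<ge> v h}"
      using assms by simp
    then have "h \<in> ideal_genA {Pmon a | a. mon_val a \<ge> v h}"
      using bar_nu unfolding is_bar_nu_def generating_sequence_def by blast
    then obtain S c where S: "h = (\<Sum>g\<in>S. c g * g)" "finite S"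
        "S \<subseteq> {Pmon a | a. mon_val a \<ge> v h}" "c ` S \<subseteq> locA"
      unfolding ideal_genA_def by blast
    have terms: "c g * g = 0 \<or> v (c g * g) > v h" if "g \<in> S" for g
    proof (cases "c g = 0")
      case False
      obtain a where a: "g = Pmon a" "mon_val a \<ge> v h"
        using S(3) \<open>g \<in> S\<close> by blast
      then have "v g > v h"
        using no_mon v_Pmon by (metis order_le_imp_less_or_eq)
      moreover have "v (c g) \<ge> 0"
        using v_locA[OF bar_nu_dominating] S(4) \<open>g \<in> S\<close> False by blast
      ultimately show ?thesis
        using v_mult[OF bar_nu_dominating False] a Pmon_ne0[where 'a='k] by simp
    qed simp
    have "(\<Sum>g\<in>S. c g * g) = 0 \<or> v (\<Sum>g\<in>S. c g * g) > v h"
      by (rule v_sum_gt[OF bar_nu_dominating S(2)]) (use terms in blast)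
    then show False
      using assms S(1) by simp
  qed
  then show ?thesis
    using that by blast
qed

text \<open>Every element of M_n is a monomial value minus n (multiply by x^n).\<close>
lemma Mn_element:
  assumes "x \<in> Mn v n"
  obtains a where "x = mon_val a - of_nat n"
proof -
  obtain f where f: "x = v f" "f \<in> Wn n" "f \<noteq> 0"
    using assms unfolding Mn_def by blast
  obtain F where F: "f * emb varX ^ n = emb F"
    using Wn_times_varX_power[OF f(2)] by blast
  have F0: "emb F \<noteq> 0"
    using F f(3) by (metis emb_eq_0_iff mult_eq_0_iff power_eq_0_iff varX_ne0)
  have "v (emb F) = x + of_nat n"
    using F f v_mult[OF bar_nu_dominating f(3), of "emb varX ^ n"]
      v_power[OF bar_nu_dominating] v_varX
    by simp
  moreover obtain a where "v (emb F) = mon_val a"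
    using locA_value_is_mon_val[OF emb_locA F0] by blast
  ultimately have "x = mon_val a - of_nat n"
    by simp
  then show ?thesis
    by (rule that)
qed

text \<open>For j \<ge> n and g = a/b in A, P_j a / x^n lies in W_n and has value beta_j - n + v g.\<close>
lemma shifted_value_in_Mn:
  assumes "n \<le> j" "m \<in> M0 v"
  shows "bbeta j - of_nat n + m \<in> Mn v n"
proof -
  obtain a b where g: "m = v (Fract a b)" "at_origin b \<noteq> 0" "Fract a b \<noteq> 0"
    using assms(2) unfolding M0_def locA_def by blast
  have a0: "a \<noteq> 0"
    using g(3) by (auto simp: fract_collapse)
  have "in_max_power (j + 0) (Pseq j * a)"
    by (rule in_max_power_mult[OF in_max_power_Pseq in_max_power.zero])
  then have "in_max_power n (Pseq j * a)"
    using assms(1) by (simp add: in_max_power_mono)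
  then have W: "emb (Pseq j * a) / emb varX ^ n \<in> Wn n"
    by (rule in_max_power_Wn)
  have nonzero: "emb (Pseq j * a) / emb varX ^ n \<noteq> 0"
    using a0 Pseq_ne0 by simp
  have "v (emb (Pseq j * a) / emb varX ^ n) = v (emb (Pseq j * a)) - v (emb varX ^ n)"
    using a0 Pseq_ne0[where 'a='k] by (intro v_divide[OF bar_nu_dominating]) simp_all
  also have "\<dots> = bbeta j + v (emb a) - of_nat n"
    using a0 Pseq_ne0[where 'a='k]
    by (simp add: emb_mult v_mult[OF bar_nu_dominating] v_power[OF bar_nu_dominating] v_Pseq v_varX)
  also have "\<dots> = bbeta j - of_nat n + m"
    using g v_Fract[OF bar_nu_dominating g(2) a0] by simp
  finally show ?thesis
    unfolding Mn_def using W nonzero by force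
qed

end

theorem mainTheorem14:
  fixes v :: "'k::alg_closed_field poly poly fract \<Rightarrow> rat"
  assumes "is_bar_nu v" and "n \<ge> 1"
  shows "Mn v n = Useg v n \<union> (\<Union>j\<in>{n..}. (\<lambda>m. (bbeta j - of_nat n) + m) ` M0 v)"
proof
  show "Mn v n \<subseteq> Useg v n \<union> (\<Union>j\<in>{n..}. (\<lambda>m. (bbeta j - of_nat n) + m) ` M0 v)"
  proof
    fix x assume x: "x \<in> Mn v n"
    then obtain a where xa: "x = mon_val a - of_nat n"
      using Mn_element[OF assms(1)] by blast
    from assms(2) show "x \<in> Useg v n \<union> (\<Union>j\<in>{n..}. (\<lambda>m. (bbeta j - of_nat n) + m) ` M0 v)"
    proof (cases rule: mon_val_minus_cases[where a=a])
      case (high i a')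
      then show ?thesis
        using xa mon_val_in_M0[OF assms(1)] by blast
    next
      case (low l)
      then show ?thesis
        using x xa unfolding Useg_def by blast
    qed
  qed
next
  show "Useg v n \<union> (\<Union>j\<in>{n..}. (\<lambda>m. (bbeta j - of_nat n) + m) ` M0 v) \<subseteq> Mn v n"
    using shifted_value_in_Mn[OF assms(1)] unfolding Useg_def by auto
qed

end
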